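(* Let $\alpha>0$, $\delta\ge0$ with $\alpha+\delta\le\pi$, and let $f$ be a spectral density on $\Lambda$ such that $f(\lambda)=0$ whenever $e^{i\lambda}\notin\Gamma_{\alpha,\delta}$. Then for every $n\in\mathbb N$, $$\sigma_n^2(f)\le 4c\,(\sin(\alpha/2))^{n-1}(\sin(\alpha/2+\delta))^{n-1},$$ where $c=r(0)=\int_\Lambda f(\lambda)\,d\lambda$.
   Context: $\Lambda=[-\pi,\pi]$. A spectral density is $f\ge0$, $f\in L^1(\Lambda)$, positive on a set of positive measure, with covariances $r(t)=\int_\Lambda e^{-it\lambda}f(\lambda)d\lambda$. $\sigma_n^2(f)=\min_{c_1,\dots,c_n\in\mathbb C}\int_\Lambda|1-\sum_{k=1}^n c_ke^{-ik\lambda}|^2f(\lambda)\,d\lambda$. $\Gamma_{\alpha,\delta}=\{e^{i\theta}:\theta\in[-(\delta+\alpha),-\delta]\cup[\delta,\delta+\alpha]\}$ (two arcs of length $\alpha$ at circular distance $2\delta$; for $\delta=0$ a single arc of length $2\alpha$). *)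

theory Defs
  imports "HOL-Analysis.Analysis"
begin

definition spectral_density :: "(real \<Rightarrow> real) \<Rightarrow> bool" where
  "spectral_density f \<longleftrightarrow>
     (\<forall>l\<in>{-pi..pi}. f l \<ge> 0) \<and>
     set_integrable lborel {-pi..pi} f \<and>
     emeasure lborel {l\<in>{-pi..pi}. f l > 0} > 0"

definition covariance :: "(real \<Rightarrow> real) \<Rightarrow> int \<Rightarrow> complex" where
  "covariance f t = (LINT l:{-pi..pi}|lborel. exp (- \<i> * of_int t * of_real l) * of_real (f l))"

definition sigma_sq :: "nat \<Rightarrow> (real \<Rightarrow> real) \<Rightarrow> real" where
  "sigma_sq n f = Inf {(LINT l:{-pi..pi}|lborel.
        (cmod (1 - (\<Sum>k=1..n. c k * exp (- \<i> * of_nat k * of_real l))))\<^sup>2 * f l)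
      | c :: nat \<Rightarrow> complex. True}"

definition Gamma_arcs :: "real \<Rightarrow> real \<Rightarrow> complex set" where
  "Gamma_arcs \<alpha> \<delta> = {cis \<theta> | \<theta>. \<theta> \<in> {-(\<delta>+\<alpha>)..-\<delta>} \<union> {\<delta>..\<delta>+\<alpha>}}"

end

theory Submission
  imports Defs "HOL-Computational_Algebra.Polynomial"
begin

text \<open>Any polynomial P of degree at most n with P(0) = 1 is an admissible predictor, so
  sigma_n^2(f) <= c * sup |P(e^(-i\<lambda>))|^2 over the support of f. On the arcs, cos \<lambda> lies in an
  interval of half-length h = sin(\<alpha>/2) sin(\<alpha>/2 + \<delta>) centred at cos \<delta> - h. As
  2 cos \<lambda> = z + 1/z for z = e^(-i\<lambda>), the polynomial z^m T_m((z^2 - 2 (cos \<delta> - h) z + 1) / (2 h z))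
  built from the Chebyshev polynomial T_m has degree 2m, is bounded by 1 on the arcs and equals
  1/(2 h^m) at 0. Normalising it at 0 with m = n div 2 gives sigma_n^2(f) <= 4 h^(2m) c <= 4 h^(n-1) c.\<close>

lemma spectral_density_integral_nonneg:
  assumes "spectral_density f"
  shows "0 \<le> (LINT l:{-pi..pi}|lborel. f l)"
  using assms unfolding spectral_density_def set_lebesgue_integral_def
  by (auto intro!: Bochner_Integration.integral_nonneg simp: indicator_def)

lemma sigma_sq_le_integral:
  assumes "\<forall>l\<in>{-pi..pi}. f l \<ge> 0"
  shows "sigma_sq n f \<le> (LINT l:{-pi..pi}|lborel.
           (cmod (1 - (\<Sum>k=1..n. c k * exp (- \<i> * of_nat k * of_real l))))\<^sup>2 * f l)"
  unfolding sigma_sq_def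
proof (rule cInf_lower)
  show "bdd_below {(LINT l:{-pi..pi}|lborel.
        (cmod (1 - (\<Sum>k=1..n. c k * exp (- \<i> * of_nat k * of_real l))))\<^sup>2 * f l)
      | c :: nat \<Rightarrow> complex. True}"
    by (rule bdd_belowI[where m = 0])
      (use assms in \<open>auto simp: set_lebesgue_integral_def indicator_def
         intro!: Bochner_Integration.integral_nonneg\<close>)
qed blast

lemma exp_eq_cis_power: "exp (- \<i> * of_nat k * of_real l) = cis (- l) ^ k"
proof -
  have "exp (- \<i> * of_nat k * of_real l) = exp (- (\<i> * complex_of_real l)) ^ k"
    using exp_of_nat_mult[of k "- (\<i> * complex_of_real l)"] by (simp add: algebra_simps)
  then show ?thesis by (simp add: cis_conv_exp)
qed

lemma poly_cis_eq_prediction_error: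
  fixes P :: "complex poly"
  assumes "degree P \<le> n" and "coeff P 0 = 1"
  shows "poly P (cis (- l)) = 1 - (\<Sum>k=1..n. - coeff P k * exp (- \<i> * of_nat k * of_real l))"
proof -
  have "poly P (cis (- l)) = (\<Sum>k\<le>n. coeff P k * cis (- l) ^ k)"
    unfolding poly_altdef using assms(1)
    by (intro sum.mono_neutral_left) (auto simp: coeff_eq_0)
  also have "\<dots> = 1 + (\<Sum>k=1..n. coeff P k * cis (- l) ^ k)"
    using assms(2) by (simp add: atMost_atLeast0 sum.atLeast_Suc_atMost)
  finally show ?thesis by (simp only: exp_eq_cis_power) (simp add: sum_negf)
qed

lemma sigma_sq_le_poly_bound:
  fixes P :: "complex poly"
  assumes f: "spectral_density f" and "degree P \<le> n" and "coeff P 0 = 1"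
    and bound: "\<And>l. l \<in> {-pi..pi} \<Longrightarrow> f l \<noteq> 0 \<Longrightarrow> cmod (poly P (cis (- l))) \<le> B"
  shows "sigma_sq n f \<le> B\<^sup>2 * (LINT l:{-pi..pi}|lborel. f l)"
proof -
  have nonneg: "\<forall>l\<in>{-pi..pi}. f l \<ge> 0" and int: "set_integrable lborel {-pi..pi} f"
    using f by (auto simp: spectral_density_def)
  have pointwise: "(cmod (poly P (cis (- l))))\<^sup>2 * f l \<le> B\<^sup>2 * f l" if "l \<in> {-pi..pi}" for l
  proof (cases "f l = 0")
    case False
    have "(cmod (poly P (cis (- l))))\<^sup>2 \<le> B\<^sup>2"
      using bound[OF that False] by (intro power_mono) auto
    then show ?thesis using nonneg that by (simp add: mult_right_mono)
  qed simp
  have "sigma_sq n f \<le> (LINT l:{-pi..pi}|lborel. (cmod (poly P (cis (- l))))\<^sup>2 * f l)"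
    using sigma_sq_le_integral[OF nonneg, of n "\<lambda>k. - coeff P k"]
    by (simp add: poly_cis_eq_prediction_error[OF assms(2,3)])
  also have "\<dots> \<le> (LINT l:{-pi..pi}|lborel. B\<^sup>2 * f l)"
  proof -
    have "set_integrable lborel {-pi..pi} (\<lambda>l. B\<^sup>2 * f l)"
      using int by simp
    then show ?thesis
      unfolding set_lebesgue_integral_def set_integrable_def using nonneg pointwise
      by (intro integral_mono') (auto simp: indicator_def)
  qed
  finally show ?thesis by simp
qed

lemma unit_circle_sq_add_one:
  assumes "cmod z = 1"
  shows "z\<^sup>2 + 1 = 2 * z * complex_of_real (Re z)"
proof -
  have "z * cnj z = 1"
    using assms by (simp add: complex_mult_cnj cmod_def)
  then have "z\<^sup>2 + 1 = z * (z + cnj z)"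
    by (simp add: power2_eq_square algebra_simps)
  then show ?thesis
    by (simp add: complex_add_cnj)
qed

lemma cos_centred_on_arcs:
  assumes "\<alpha> > 0" "\<delta> \<ge> 0" "\<alpha> + \<delta> \<le> pi" "cis l \<in> Gamma_arcs \<alpha> \<delta>"
  defines "h \<equiv> sin (\<alpha>/2) * sin (\<alpha>/2 + \<delta>)"
  shows "\<bar>cos l - (cos \<delta> - h)\<bar> \<le> h"
proof -
  obtain \<theta> where \<theta>: "cis l = cis \<theta>" "\<delta> \<le> \<bar>\<theta>\<bar>" "\<bar>\<theta>\<bar> \<le> \<delta> + \<alpha>"
    using assms(2,4) unfolding Gamma_arcs_def by auto
  have "cos l = cos \<bar>\<theta>\<bar>"
    using arg_cong[OF \<theta>(1), of Re] by (simp add: abs_if)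
  moreover have "cos (\<delta> + \<alpha>) \<le> cos \<bar>\<theta>\<bar>" "cos \<bar>\<theta>\<bar> \<le> cos \<delta>"
    using \<theta> assms(1-3) by (intro cos_monotone_0_pi_le; linarith)+
  moreover have "cos (\<delta> + \<alpha>) = cos \<delta> - 2 * h"
    using cos_diff_cos[of \<delta> "\<delta> + \<alpha>"] unfolding h_def
    by (simp add: algebra_simps add_divide_distrib)
  ultimately show ?thesis by linarith
qed

text \<open>cheb_hom L k = z^k T_k(L(z)/z) for the Chebyshev polynomial T_k, via the recurrence
  T_(k+2) = 2x T_(k+1) - T_k.\<close>
fun cheb_hom :: "'a::comm_ring_1 poly \<Rightarrow> nat \<Rightarrow> 'a poly" where
  "cheb_hom L 0 = 1"
| "cheb_hom L (Suc 0) = L"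
| "cheb_hom L (Suc (Suc k)) = smult 2 (L * cheb_hom L (Suc k)) - [:0, 0, 1:] * cheb_hom L k"

lemma degree_cheb_hom:
  assumes "degree L \<le> 2"
  shows "degree (cheb_hom L k) \<le> 2 * k"
  using assms
proof (induction L k rule: cheb_hom.induct)
  case (3 L k)
  have "degree (L * cheb_hom L (Suc k)) \<le> 2 * Suc (Suc k)"
    using degree_mult_le[of L "cheb_hom L (Suc k)"] "3.prems" "3.IH"(1)[OF "3.prems"]
    unfolding mult_Suc_right by linarith
  then have "degree (smult 2 (L * cheb_hom L (Suc k))) \<le> 2 * Suc (Suc k)"
    by (rule order_trans[OF degree_smult_le])
  moreover have "degree ([:0, 0, 1:] * cheb_hom L k) \<le> 2 * Suc (Suc k)"
    using degree_mult_le[of "[:0, 0, 1:]" "cheb_hom L k"] "3.IH"(2)[OF "3.prems"] by simp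
  ultimately show ?case
    unfolding cheb_hom.simps by (rule degree_diff_le)
qed auto

lemma poly_cheb_hom_0:
  assumes "k \<ge> 1"
  shows "poly (cheb_hom L k) 0 = poly L 0 * (2 * poly L 0) ^ (k - 1)"
  using assms
proof (induction L k rule: cheb_hom.induct)
  case (3 L k)
  then show ?case by (cases k) (auto simp: algebra_simps)
qed auto

lemma cos_Suc_Suc_mult:
  "cos (real (Suc (Suc k)) * p) = 2 * cos p * cos (real (Suc k) * p) - cos (real k * p)"
  using cos_add[of "real (Suc k) * p" p] cos_diff[of "real (Suc k) * p" p]
  by (simp add: algebra_simps)

lemma poly_cheb_hom_cos:
  assumes "poly L z = z * complex_of_real (cos p)"
  shows "poly (cheb_hom L k) z = z ^ k * complex_of_real (cos (real k * p))"
  using assms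
proof (induction L k rule: cheb_hom.induct)
  case (3 L k)
  have "poly (cheb_hom L (Suc (Suc k))) z
      = z ^ Suc (Suc k) * complex_of_real (2 * cos p * cos (real (Suc k) * p) - cos (real k * p))"
    by (simp only: cheb_hom.simps poly_diff poly_smult poly_mult 3
        of_real_diff of_real_mult of_real_numeral) (simp add: algebra_simps power2_eq_square)
  then show ?case
    by (simp only: cos_Suc_Suc_mult)
qed auto

lemma unit_circle_polynomial_bound:
  fixes c h :: real and m :: nat
  assumes "h > 0"
  obtains P :: "complex poly"
  where "degree P \<le> 2 * m" "coeff P 0 = 1"
    and "\<And>z. cmod z = 1 \<Longrightarrow> \<bar>Re z - c\<bar> \<le> h \<Longrightarrow> cmod (poly P z) \<le> 2 * h ^ m"
proof -
  txt \<open>On the unit circle L(z) = z (Re z - c)/h, so the bound |T_m| <= 1 on [-1, 1] controls Q.\<close>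
  define L where "L = smult (complex_of_real (1 / (2 * h))) [:1, - 2 * complex_of_real c, 1:]"
  define Q where "Q = cheb_hom L m"
  define P where "P = smult (1 / poly Q 0) Q"
  have Q0: "poly Q 0 \<noteq> 0" "cmod (1 / poly Q 0) \<le> 2 * h ^ m"
  proof (atomize (full), cases m)
    case (Suc k)
    have "poly Q 0 = complex_of_real (1 / (2 * h)) * complex_of_real (1 / h) ^ k"
      using poly_cheb_hom_0[of m L] Suc by (simp add: Q_def L_def)
    also have "\<dots> = complex_of_real (1 / (2 * h ^ m))"
      using Suc by (simp add: power_divide)
    finally show "poly Q 0 \<noteq> 0 \<and> cmod (1 / poly Q 0) \<le> 2 * h ^ m"
      using assms by (simp add: norm_divide norm_power)
  qed (simp add: Q_def)
  have "degree P \<le> 2 * m"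
    unfolding P_def Q_def L_def
    by (intro order_trans[OF degree_smult_le] degree_cheb_hom order_trans[OF degree_smult_le]) simp
  moreover have "coeff P 0 = 1"
    using Q0 by (simp add: P_def poly_0_coeff_0[symmetric])
  moreover have "cmod (poly P z) \<le> 2 * h ^ m" if z: "cmod z = 1" "\<bar>Re z - c\<bar> \<le> h" for z
  proof -
    define p where "p = arccos ((Re z - c) / h)"
    have "cos p = (Re z - c) / h"
      using z(2) assms by (simp add: p_def cos_arccos abs_le_iff divide_le_eq le_divide_eq)
    then have Re_z: "Re z - c = h * cos p"
      using assms by simp
    have "poly (smult \<kappa> [:1, - 2 * complex_of_real c, 1:]) z
        = \<kappa> * (z\<^sup>2 + 1 - 2 * complex_of_real c * z)" for \<kappa>
      by (simp add: algebra_simps power2_eq_square)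
    then have "poly L z = complex_of_real (1 / (2 * h)) * (z\<^sup>2 + 1 - 2 * complex_of_real c * z)"
      unfolding L_def .
    also have "\<dots> = complex_of_real (1 / (2 * h)) * (2 * z * complex_of_real (Re z - c))"
      using unit_circle_sq_add_one[OF z(1)] by (simp only: of_real_diff) (simp add: algebra_simps)
    also have "\<dots> = z * complex_of_real (cos p)"
      using assms by (simp add: Re_z field_simps)
    finally have "poly Q z = z ^ m * complex_of_real (cos (real m * p))"
      unfolding Q_def by (rule poly_cheb_hom_cos)
    then have Qz: "cmod (poly Q z) \<le> 1"
      using z(1) by (simp add: norm_mult norm_power abs_cos_le_one)
    have "cmod (poly P z) = cmod (1 / poly Q 0) * cmod (poly Q z)"
      unfolding P_def by (simp only: poly_smult norm_mult)
    also have "\<dots> \<le> cmod (1 / poly Q 0)"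
      by (rule mult_left_le[OF Qz norm_ge_zero])
    finally show ?thesis
      using Q0 by linarith
  qed
  ultimately show ?thesis using that by blast
qed

theorem mainTheorem7:
  fixes \<alpha> \<delta> :: real and f :: "real \<Rightarrow> real" and n :: nat
  assumes "\<alpha> > 0" and "\<delta> \<ge> 0" and "\<alpha> + \<delta> \<le> pi"
    and "spectral_density f"
    and "\<forall>l\<in>{-pi..pi}. cis l \<notin> Gamma_arcs \<alpha> \<delta> \<longrightarrow> f l = 0"
    and "n \<ge> 1"
  shows "sigma_sq n f \<le>
    4 * (LINT l:{-pi..pi}|lborel. f l) * (sin (\<alpha>/2)) ^ (n-1) * (sin (\<alpha>/2 + \<delta>)) ^ (n-1)"
proof -
  define h where "h = sin (\<alpha>/2) * sin (\<alpha>/2 + \<delta>)"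
  have "sin (\<alpha>/2) > 0" "sin (\<alpha>/2 + \<delta>) > 0"
    using assms(1-3) by (auto intro!: sin_gt_zero)
  then have h: "0 < h" "h \<le> 1"
    by (auto simp: h_def sin_le_one intro!: mult_le_one)
  obtain P where P: "degree P \<le> 2 * (n div 2)" "coeff P 0 = 1"
    and bound: "\<And>z. cmod z = 1 \<Longrightarrow> \<bar>Re z - (cos \<delta> - h)\<bar> \<le> h \<Longrightarrow> cmod (poly P z) \<le> 2 * h ^ (n div 2)"
    using unit_circle_polynomial_bound[OF h(1)] by blast
  have "sigma_sq n f \<le> (2 * h ^ (n div 2))\<^sup>2 * (LINT l:{-pi..pi}|lborel. f l)"
  proof (rule sigma_sq_le_poly_bound[OF assms(4)])
    show "degree P \<le> n" using P(1) by linarith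
    fix l assume "l \<in> {-pi..pi}" "f l \<noteq> 0"
    then have "\<bar>cos l - (cos \<delta> - h)\<bar> \<le> h"
      using assms(1-3,5) cos_centred_on_arcs unfolding h_def by blast
    then show "cmod (poly P (cis (- l))) \<le> 2 * h ^ (n div 2)"
      by (intro bound) simp_all
  qed (use P in auto)
  also have "\<dots> \<le> 4 * h ^ (n - 1) * (LINT l:{-pi..pi}|lborel. f l)"
  proof (rule mult_right_mono)
    have "h ^ (2 * (n div 2)) \<le> h ^ (n - 1)"
      using h by (intro power_decreasing) auto
    then show "(2 * h ^ (n div 2))\<^sup>2 \<le> 4 * h ^ (n - 1)"
      by (simp add: power_mult_distrib power_mult[symmetric] mult.commute)
  qed (rule spectral_density_integral_nonneg[OF assms(4)])
  finally show ?thesis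
    by (simp add: h_def power_mult_distrib mult_ac)
qed

end
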